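(* An element $r\in\mathrm{Im}(1-\tau)\subset\overline{\mathfrak L}\otimes\overline{\mathfrak L}$ satisfies the classical Yang–Baxter equation $c(r)=0$ if and only if it satisfies the modified Yang–Baxter equation $x\cdot c(r)=0$ for all $x\in\overline{\mathfrak L}$.
   Context: Let $\mathbb F$ be a field of characteristic $0$ and let $\Gamma$ be an additive subgroup of $\mathbb F$ with $\mathbb Z\subseteq\Gamma$. The centerless generalized Heisenberg–Virasoro algebra $\overline{\mathfrak L}$ is the Lie algebra with basis $\{L_x:x\in\Gamma\}\cup\{I_x:x\in\Gamma\setminus\{0\}\}$ (with the convention $I_0=0$) and brackets $[L_x,L_y]=(y-x)L_{x+y}$, $[L_x,I_y]=yI_{x+y}$, $[I_x,I_y]=0$. $\tau(a\otimes b)=b\otimes a$. For $r=\sum_i a_i\otimes b_i$, define $$c(r)=\sum_{i,j}\big([a_i,a_j]\otimes b_i\otimes b_j+a_i\otimes[b_i,a_j]\otimes b_j+a_i\otimes a_j\otimes[b_i,b_j]\big)\in\overline{\mathfrak L}^{\otimes3},$$ i.e. $c(r)=[r^{12},r^{13}]+[r^{12},r^{23}]+[r^{13},r^{23}]$. The action on $\overline{\mathfrak L}^{\otimes 3}$ is the diagonal adjoint action. *)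

theory Defs
  imports Main
begin

text \<open>Basis of the centerless generalized Heisenberg-Virasoro algebra:
  LL x stands for L_x (x in Gamma), II x for I_x (x in Gamma, x nonzero).
  Elements of the algebra and of its tensor powers are represented by their
  coefficient functions on the (tensor) basis, with finite support.\<close>

datatype 'a hvb = LL 'a | II 'a

definition vsupp :: "('b \<Rightarrow> 'a::zero) \<Rightarrow> 'b set" where
  "vsupp f = {b. f b \<noteq> 0}"

definition add_subgroup_with_Z :: "'a::field_char_0 set \<Rightarrow> bool" where
  "add_subgroup_with_Z G \<longleftrightarrow> 0 \<in> G \<and> (\<forall>x\<in>G. \<forall>y\<in>G. x + y \<in> G) \<and> (\<forall>x\<in>G. - x \<in> G)
     \<and> (\<int> :: 'a set) \<subseteq> G"

definition valid_basis :: "'a::field_char_0 set \<Rightarrow> 'a hvb \<Rightarrow> bool" where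
  "valid_basis G b = (case b of LL x \<Rightarrow> x \<in> G | II x \<Rightarrow> x \<in> G \<and> x \<noteq> 0)"

definition is_elem :: "'a::field_char_0 set \<Rightarrow> ('a hvb \<Rightarrow> 'a) \<Rightarrow> bool" where
  "is_elem G u \<longleftrightarrow> finite (vsupp u) \<and> (\<forall>b\<in>vsupp u. valid_basis G b)"

definition is_tensor2 :: "'a::field_char_0 set \<Rightarrow> ('a hvb \<times> 'a hvb \<Rightarrow> 'a) \<Rightarrow> bool" where
  "is_tensor2 G t \<longleftrightarrow> finite (vsupp t) \<and> (\<forall>(a,b)\<in>vsupp t. valid_basis G a \<and> valid_basis G b)"

definition tau :: "('b \<times> 'b \<Rightarrow> 'a) \<Rightarrow> ('b \<times> 'b \<Rightarrow> 'a)" where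
  "tau t = (\<lambda>(a,b). t (b,a))"

definition im_one_minus_tau :: "'a::field_char_0 set \<Rightarrow> ('a hvb \<times> 'a hvb \<Rightarrow> 'a) set" where
  "im_one_minus_tau G = {r. \<exists>t. is_tensor2 G t \<and> r = (\<lambda>p. t p - tau t p)}"

text \<open>brb b c d = coefficient of basis vector d in [b, c] (with I_0 = 0).\<close>
fun brb :: "'a::field_char_0 hvb \<Rightarrow> 'a hvb \<Rightarrow> 'a hvb \<Rightarrow> 'a" where
  "brb (LL x) (LL y) d = (if d = LL (x + y) then y - x else 0)"
| "brb (LL x) (II y) d = (if x + y \<noteq> 0 \<and> d = II (x + y) then y else 0)"
| "brb (II y) (LL x) d = (if x + y \<noteq> 0 \<and> d = II (x + y) then - y else 0)"
| "brb (II y) (II z) d = 0"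

definition dlt :: "'b \<Rightarrow> 'b \<Rightarrow> 'a::field_char_0" where
  "dlt p a = (if p = a then 1 else 0)"

text \<open>c(r) = [r12,r13] + [r12,r23] + [r13,r23], computed from the basis
  expansion r = sum r(a,b) a (x) b; coefficient function on basis triples.\<close>
definition cybe :: "('a::field_char_0 hvb \<times> 'a hvb \<Rightarrow> 'a) \<Rightarrow> ('a hvb \<times> 'a hvb \<times> 'a hvb \<Rightarrow> 'a)" where
  "cybe r = (\<lambda>(p,q,s). \<Sum>(a,b)\<in>vsupp r. \<Sum>(a',b')\<in>vsupp r. r (a,b) * r (a',b') *
      (brb a a' p * dlt q b * dlt s b'
       + dlt p a * brb b a' q * dlt s b'
       + dlt p a * dlt q a' * brb b b' s))"

definition act3 :: "('a::field_char_0 hvb \<Rightarrow> 'a) \<Rightarrow> ('a hvb \<times> 'a hvb \<times> 'a hvb \<Rightarrow> 'a)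
    \<Rightarrow> ('a hvb \<times> 'a hvb \<times> 'a hvb \<Rightarrow> 'a)" where
  "act3 x T = (\<lambda>(p,q,s). \<Sum>b\<in>vsupp x. \<Sum>(a1,a2,a3)\<in>vsupp T. x b * T (a1,a2,a3) *
      (brb b a1 p * dlt q a2 * dlt s a3
       + dlt p a1 * brb b a2 q * dlt s a3
       + dlt p a1 * dlt q a2 * brb b a3 s))"

end

theory Submission
  imports Defs
begin

text \<open>
  The easy direction is immediate: the zero tensor is invariant.
  For the converse we show that the only tensor T in L (x) L (x) L that is
  annihilated by ad L_m for infinitely many m (in particular for all integers m)
  is T = 0, provided T has finite support and no first factor of the form I_0.
  The operator ad L_m shifts the weight of a basis vector by m.  Fix a basis
  triple (a1,a2,a3) in the support of T and pick m outside the finite set of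
  weight differences wt c1 - wt a1 of the support and different from +-wt a1.
  Then the coefficient of (shift m a1, a2, a3) in L_m . T comes from the single
  term T(a1,a2,a3) [L_m, a1], which is nonzero; hence T(a1,a2,a3) = 0.
  The file first sets up weights and shifts of basis vectors, then proves this
  invariance lemma, then checks that c(r) has finite support avoiding I_0 in the
  first factor whenever r lies in L (x) L, and finally assembles the theorem.
\<close>

fun wt :: "'a hvb \<Rightarrow> 'a" where
  "wt (LL x) = x" | "wt (II x) = x"

fun shift :: "'a::plus \<Rightarrow> 'a hvb \<Rightarrow> 'a hvb" where
  "shift n (LL x) = LL (n + x)" | "shift n (II x) = II (n + x)"

text \<open>The basis vector in which a bracket of two basis vectors can be nonzero.\<close>
fun bres :: "'a::plus hvb \<Rightarrow> 'a hvb \<Rightarrow> 'a hvb" where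
  "bres (LL x) (LL y) = LL (x + y)"
| "bres (LL x) (II y) = II (x + y)"
| "bres (II y) (LL x) = II (x + y)"
| "bres (II y) (II z) = II y"

lemma brb_nonzero_result: "brb a b d \<noteq> 0 \<Longrightarrow> d = bres a b \<and> d \<noteq> II 0"
  by (cases a; cases b; auto split: if_splits simp: add.commute)

lemma brb_LL_shift: "brb (LL n) c p \<noteq> 0 \<Longrightarrow> p = shift n c"
  by (cases c; auto split: if_splits)

lemma wt_shift: "wt (shift n c) = n + wt c"
  by (cases c) auto

lemma shift_inj: "shift (n::'a::field_char_0) c = shift n d \<Longrightarrow> c = d"
  by (cases c; cases d; auto)

lemma brb_LL_shift_nonzero:
  fixes n :: "'a::field_char_0"
  assumes "c \<noteq> II 0" "n \<noteq> wt c" "n \<noteq> - wt c"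
  shows "brb (LL n) c (shift n c) \<noteq> 0"
  using assms by (cases c) (auto simp: add_eq_0_iff)

definition unitL :: "'a::field_char_0 \<Rightarrow> 'a hvb \<Rightarrow> 'a" where
  "unitL m = (\<lambda>b. if b = LL m then 1 else 0)"

lemma vsupp_unitL: "vsupp (unitL m) = {LL m}"
  by (auto simp: vsupp_def unitL_def)

lemma act3_unitL:
  "act3 (unitL m) T (p,q,s) = (\<Sum>(c1,c2,c3)\<in>vsupp T. T (c1,c2,c3) *
      (brb (LL m) c1 p * dlt q c2 * dlt s c3
       + dlt p c1 * brb (LL m) c2 q * dlt s c3
       + dlt p c1 * dlt q c2 * brb (LL m) c3 s))"
  by (simp add: act3_def vsupp_unitL) (simp add: unitL_def)

definition weight_gaps :: "('a::field_char_0 hvb \<times> 'a hvb \<times> 'a hvb \<Rightarrow> 'a) \<Rightarrow> 'a hvb \<Rightarrow> 'a set" where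
  "weight_gaps T a1 = (\<lambda>(c1,c2,c3). wt c1 - wt a1) ` vsupp T"

lemma act3_unitL_leading:
  fixes T :: "'a::field_char_0 hvb \<times> 'a hvb \<times> 'a hvb \<Rightarrow> 'a"
  assumes fin: "finite (vsupp T)" and a: "(a1,a2,a3) \<in> vsupp T"
    and gap: "m \<notin> weight_gaps T a1"
  shows "act3 (unitL m) T (shift m a1, a2, a3) = T (a1,a2,a3) * brb (LL m) a1 (shift m a1)"
proof -
  define F where "F = (\<lambda>(c1,c2,c3). T (c1,c2,c3) *
      (brb (LL m) c1 (shift m a1) * dlt a2 c2 * dlt a3 c3
       + dlt (shift m a1) c1 * brb (LL m) c2 a2 * dlt a3 c3
       + dlt (shift m a1) c1 * dlt a2 c2 * brb (LL m) c3 a3))"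
  have not_shifted: "shift m a1 \<noteq> c1" if "(c1,c2,c3) \<in> vsupp T" for c1 c2 c3
  proof
    assume "shift m a1 = c1"
    hence "m = wt c1 - wt a1" using wt_shift[of m a1] by simp
    thus False using gap that by (force simp: weight_gaps_def)
  qed
  have others: "F c = 0" if "c \<in> vsupp T - {(a1,a2,a3)}" for c
  proof -
    obtain c1 c2 c3 where c: "c = (c1,c2,c3)" by (cases c) auto
    have cT: "(c1,c2,c3) \<in> vsupp T" and cne: "(c1,c2,c3) \<noteq> (a1,a2,a3)" using that c by auto
    have "brb (LL m) c1 (shift m a1) * dlt a2 c2 * dlt a3 c3 = 0"
    proof (rule ccontr)
      assume "\<not> ?thesis"
      hence "brb (LL m) c1 (shift m a1) \<noteq> 0" "a2 = c2" "a3 = c3"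
        by (auto simp: dlt_def split: if_splits)
      hence "a1 = c1" using brb_LL_shift shift_inj by metis
      thus False using cne \<open>a2 = c2\<close> \<open>a3 = c3\<close> by simp
    qed
    thus ?thesis using not_shifted[OF cT] c by (simp add: F_def dlt_def)
  qed
  have "act3 (unitL m) T (shift m a1, a2, a3) = sum F (vsupp T)"
    by (simp add: act3_unitL F_def)
  also have "\<dots> = F (a1,a2,a3) + sum F (vsupp T - {(a1,a2,a3)})"
    using sum.remove[OF fin a] by simp
  also have "sum F (vsupp T - {(a1,a2,a3)}) = 0"
    using others by (rule sum.neutral[OF ballI])
  also have "F (a1,a2,a3) = T (a1,a2,a3) * brb (LL m) a1 (shift m a1)"
    using not_shifted[OF a] by (simp add: F_def dlt_def)
  finally show ?thesis by simp
qed

lemma invariant_tensor3_zero: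
  fixes T :: "'a::field_char_0 hvb \<times> 'a hvb \<times> 'a hvb \<Rightarrow> 'a"
  assumes fin: "finite (vsupp T)" and M: "infinite M"
    and noI0: "\<And>c1 c2 c3. (c1,c2,c3) \<in> vsupp T \<Longrightarrow> c1 \<noteq> II 0"
    and inv: "\<And>m. m \<in> M \<Longrightarrow> act3 (unitL m) T = (\<lambda>_. 0)"
  shows "T = (\<lambda>_. 0)"
proof (rule ccontr)
  assume "T \<noteq> (\<lambda>_. 0)"
  then obtain a1 a2 a3 where a: "(a1,a2,a3) \<in> vsupp T" by (fastforce simp: vsupp_def)
  have "finite (weight_gaps T a1 \<union> {wt a1, - wt a1})"
    using fin by (simp add: weight_gaps_def)
  then obtain m where m: "m \<in> M" "m \<notin> weight_gaps T a1 \<union> {wt a1, - wt a1}"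
    using Diff_infinite_finite[OF _ M] by (metis ex_in_conv finite.emptyI DiffE)
  have "brb (LL m) a1 (shift m a1) \<noteq> 0"
    using brb_LL_shift_nonzero noI0[OF a] m(2) by blast
  hence "act3 (unitL m) T (shift m a1, a2, a3) \<noteq> 0"
    using act3_unitL_leading[OF fin a] m(2) a by (simp add: vsupp_def)
  thus False using inv[OF m(1)] by simp
qed

lemma cybe_nonzero_witness:
  assumes "cybe r (p,q,s) \<noteq> 0"
  shows "\<exists>a b a' b'. (a,b) \<in> vsupp r \<and> (a',b') \<in> vsupp r \<and>
    ((brb a a' p \<noteq> 0 \<and> q = b \<and> s = b') \<or> (p = a \<and> brb b a' q \<noteq> 0 \<and> s = b')
      \<or> (p = a \<and> q = a' \<and> brb b b' s \<noteq> 0))"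
proof -
  define f where "f = (\<lambda>(a,b) (a',b'). r (a,b) * r (a',b') *
      (brb a a' p * dlt q b * dlt s b'
       + dlt p a * brb b a' q * dlt s b'
       + dlt p a * dlt q a' * brb b b' s))"
  have "(\<Sum>ab\<in>vsupp r. \<Sum>ab'\<in>vsupp r. f ab ab') \<noteq> 0"
    using assms by (simp add: cybe_def f_def case_prod_beta')
  then obtain ab where ab: "ab \<in> vsupp r" and "(\<Sum>ab'\<in>vsupp r. f ab ab') \<noteq> 0"
    by (rule sum.not_neutral_contains_not_neutral)
  then obtain ab' where ab': "ab' \<in> vsupp r" and ne: "f ab ab' \<noteq> 0"
    by (blast dest: sum.not_neutral_contains_not_neutral)
  obtain a b a' b' where "ab = (a,b)" "ab' = (a',b')" by fastforce
  with ab ab' ne show ?thesis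
    by (fastforce simp: f_def dlt_def split: if_splits)
qed

lemma cybe_support:
  assumes fin: "finite (vsupp r)"
    and noI0: "\<And>a b. (a,b) \<in> vsupp r \<Longrightarrow> a \<noteq> II 0"
  shows "finite (vsupp (cybe r))"
    and "\<And>p q s. (p,q,s) \<in> vsupp (cybe r) \<Longrightarrow> p \<noteq> II 0"
proof -
  define B where "B = fst ` vsupp r \<union> snd ` vsupp r"
  define P where "P = B \<union> case_prod bres ` (B \<times> B)"
  have in_P: "p \<in> P \<and> q \<in> P \<and> s \<in> P \<and> p \<noteq> II 0"
    if "(p,q,s) \<in> vsupp (cybe r)" for p q s
  proof -
    have "cybe r (p,q,s) \<noteq> 0" using that by (simp add: vsupp_def)
    then obtain a b a' b' where w: "(a,b) \<in> vsupp r" "(a',b') \<in> vsupp r"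
      and cases: "(brb a a' p \<noteq> 0 \<and> q = b \<and> s = b') \<or> (p = a \<and> brb b a' q \<noteq> 0 \<and> s = b')
        \<or> (p = a \<and> q = a' \<and> brb b b' s \<noteq> 0)"
      using cybe_nonzero_witness by blast
    have B: "a \<in> B" "b \<in> B" "a' \<in> B" "b' \<in> B"
      using w unfolding B_def by force+
    from cases show ?thesis
    proof (elim disjE conjE)
      assume "brb a a' p \<noteq> 0" "q = b" "s = b'"
      thus ?thesis using brb_nonzero_result[of a a' p] B by (auto simp: P_def)
    next
      assume "p = a" "brb b a' q \<noteq> 0" "s = b'"
      thus ?thesis using brb_nonzero_result[of b a' q] B noI0[OF w(1)] by (auto simp: P_def)
    next
      assume "p = a" "q = a'" "brb b b' s \<noteq> 0"
      thus ?thesis using brb_nonzero_result[of b b' s] B noI0[OF w(1)] by (auto simp: P_def)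
    qed
  qed
  have "vsupp (cybe r) \<subseteq> P \<times> P \<times> P"
  proof
    fix x assume "x \<in> vsupp (cybe r)"
    then show "x \<in> P \<times> P \<times> P" using in_P by (cases x) blast
  qed
  moreover have "finite P" using fin by (simp add: P_def B_def)
  ultimately show "finite (vsupp (cybe r))" by (simp add: finite_subset)
  show "\<And>p q s. (p,q,s) \<in> vsupp (cybe r) \<Longrightarrow> p \<noteq> II 0" using in_P by blast
qed

lemma im_one_minus_tau_tensor2:
  assumes "r \<in> im_one_minus_tau G"
  shows "is_tensor2 G r"
proof -
  obtain t where t: "is_tensor2 G t" and rt: "r = (\<lambda>p. t p - tau t p)"
    using assms by (auto simp: im_one_minus_tau_def)
  have sub: "vsupp r \<subseteq> vsupp t \<union> prod.swap ` vsupp t"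
  proof
    fix p assume "p \<in> vsupp r"
    then obtain a b where p: "p = (a,b)" and "t (a,b) \<noteq> 0 \<or> t (b,a) \<noteq> 0"
      by (cases p) (fastforce simp: vsupp_def rt tau_def)
    thus "p \<in> vsupp t \<union> prod.swap ` vsupp t"
      by (auto simp: vsupp_def image_iff)
  qed
  have "finite (vsupp r)"
    using t sub by (auto simp: is_tensor2_def intro: finite_subset)
  moreover have "valid_basis G a \<and> valid_basis G b" if "(a,b) \<in> vsupp r" for a b
  proof -
    have "(a,b) \<in> vsupp t \<or> (b,a) \<in> vsupp t" using sub that by auto
    thus ?thesis using t by (auto simp: is_tensor2_def)
  qed
  ultimately show ?thesis by (auto simp: is_tensor2_def)
qed

lemma act3_zero: "act3 x (\<lambda>_. 0) = (\<lambda>_. 0)"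
  by (simp add: act3_def vsupp_def fun_eq_iff split: prod.splits)

lemma unitL_is_elem:
  assumes "add_subgroup_with_Z G" and "m \<in> \<int>"
  shows "is_elem G (unitL m)"
proof -
  have "m \<in> G" using assms unfolding add_subgroup_with_Z_def by blast
  thus ?thesis by (simp add: is_elem_def vsupp_unitL valid_basis_def)
qed

lemma infinite_Ints: "infinite (\<int> :: 'a::ring_char_0 set)"
proof -
  have "inj (of_int :: int \<Rightarrow> 'a)" by (rule injI) simp
  thus ?thesis unfolding Ints_def using finite_imageD infinite_UNIV_int by blast
qed

theorem theorem3p1:
  fixes G :: "'a::field_char_0 set"
    and r :: "'a hvb \<times> 'a hvb \<Rightarrow> 'a"
  assumes "add_subgroup_with_Z G"
    and "r \<in> im_one_minus_tau G"
  shows "cybe r = (\<lambda>_. 0) \<longleftrightarrow> (\<forall>x. is_elem G x \<longrightarrow> act3 x (cybe r) = (\<lambda>_. 0))"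
proof
  assume "cybe r = (\<lambda>_. 0)"
  then show "\<forall>x. is_elem G x \<longrightarrow> act3 x (cybe r) = (\<lambda>_. 0)" by (simp add: act3_zero)
next
  assume invariant: "\<forall>x. is_elem G x \<longrightarrow> act3 x (cybe r) = (\<lambda>_. 0)"
  have r: "is_tensor2 G r" using assms(2) by (rule im_one_minus_tau_tensor2)
  have fin: "finite (vsupp r)"
    using r by (simp add: is_tensor2_def)
  have noI0: "a \<noteq> II 0" if "(a,b) \<in> vsupp r" for a b
    using r that by (auto simp: is_tensor2_def valid_basis_def)
  have cybe_fin: "finite (vsupp (cybe r))"
    and cybe_noI0: "\<And>p q s. (p,q,s) \<in> vsupp (cybe r) \<Longrightarrow> p \<noteq> II 0"
    using cybe_support[OF fin] noI0 by blast+
  show "cybe r = (\<lambda>_. 0)"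
  proof (rule invariant_tensor3_zero[OF cybe_fin infinite_Ints cybe_noI0])
    show "\<And>m. m \<in> \<int> \<Longrightarrow> act3 (unitL m) (cybe r) = (\<lambda>_. 0)"
      using invariant unitL_is_elem[OF assms(1)] by blast
  qed
qed

end
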